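(* Let $\mathcal{H}$ be a complex Hilbert space and $A,B\in\mathcal{B}(\mathcal{H})$. Then for every non-negative non-decreasing convex function $h$ on $[0,\infty)$, \[ h\big(\omega(A^{*}B)\big) \leq \frac{1}{2} h\big(\|A\|\,\|B\|\big) + \frac{1}{2} h\big(\omega(BA^{*})\big). \]
   Context: $\omega(T)=\sup\{|\langle Tx,x\rangle|:x\in\mathcal{H},\|x\|=1\}$ denotes the numerical radius and $\|\cdot\|$ the operator norm. *)

theory Defs
  imports "HOL-Analysis.Analysis"
begin

class complex_vector = real_vector +
  fixes scaleC :: "complex \<Rightarrow> 'a \<Rightarrow> 'a" (infixr "*\<^sub>C" 75)
  assumes scaleC_add_right: "a *\<^sub>C (x + y) = a *\<^sub>C x + a *\<^sub>C y"
    and scaleC_add_left: "(a + b) *\<^sub>C x = a *\<^sub>C x + b *\<^sub>C x"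
    and scaleC_scaleC: "a *\<^sub>C (b *\<^sub>C x) = (a * b) *\<^sub>C x"
    and scaleC_one: "1 *\<^sub>C x = x"
    and scaleR_scaleC: "scaleR r x = complex_of_real r *\<^sub>C x"

class complex_inner = real_normed_vector + complex_vector +
  fixes cinner :: "'a \<Rightarrow> 'a \<Rightarrow> complex"
  assumes cinner_commute: "cinner x y = cnj (cinner y x)"
    and cinner_add_left: "cinner (x + y) z = cinner x z + cinner y z"
    and cinner_scaleC_left: "cinner (a *\<^sub>C x) y = a * cinner x y"
    and cinner_real_nonneg: "Im (cinner x x) = 0 \<and> Re (cinner x x) \<ge> 0"
    and cinner_eq_zero_iff: "cinner x x = 0 \<longleftrightarrow> x = 0"
    and norm_eq_sqrt_cinner: "norm x = sqrt (Re (cinner x x))"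

class chilbert_space = complex_inner + complete_space

definition bounded_clinear :: "('a::complex_inner \<Rightarrow> 'b::complex_inner) \<Rightarrow> bool" where
  "bounded_clinear T \<longleftrightarrow>
     (\<forall>x y. T (x + y) = T x + T y) \<and> (\<forall>c x. T (c *\<^sub>C x) = c *\<^sub>C T x) \<and>
     (\<exists>K. \<forall>x. norm (T x) \<le> norm x * K)"

definition is_adjoint :: "('a::complex_inner \<Rightarrow> 'a) \<Rightarrow> ('a \<Rightarrow> 'a) \<Rightarrow> bool" where
  "is_adjoint S A \<longleftrightarrow> (\<forall>x y. cinner (A x) y = cinner x (S y))"

text \<open>Numerical radius omega(T) = sup{|<Tx,x>| : ||x|| = 1}; the 0 only matters for the
trivial space (where the sup over the empty set is 0 by convention); all values are >= 0.\<close>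
definition numerical_radius :: "('a::complex_inner \<Rightarrow> 'a) \<Rightarrow> real" where
  "numerical_radius T = Sup (insert 0 {cmod (cinner (T x) x) | x. norm x = 1})"

end

theory Submission
  imports Defs
begin

text \<open>For unit vectors x and y put w = A* y and c = \<langle>y, A x\<rangle> = \<langle>w, x\<rangle>. The vector
  r = 2 c x - w is the reflection of w in the line through x, so \<parallel>r\<parallel> = \<parallel>w\<parallel> \<le> \<parallel>A\<parallel>, and
  2 c \<langle>B x, y\<rangle> = \<langle>B r, y\<rangle> + \<langle>B A* y, y\<rangle>. Hence
  2 |\<langle>y, A x\<rangle> \<langle>B x, y\<rangle>| \<le> \<parallel>A\<parallel> \<parallel>B\<parallel> + \<omega>(B A*). Choosing y = B x / \<parallel>B x\<parallel> turns the left
  side into 2 |\<langle>A* B x, x\<rangle>|, so \<omega>(A* B) is at most the midpoint of \<parallel>A\<parallel> \<parallel>B\<parallel> and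
  \<omega>(B A*); monotonicity and convexity of h finish the proof.\<close>

context complex_inner begin

lemma cinner_zero_left [simp]: "cinner 0 y = 0"
  using cinner_add_left[of 0 0 y] by simp

lemma cinner_zero_right [simp]: "cinner y 0 = 0"
  using cinner_commute[of y 0] by simp

lemma cinner_add_right: "cinner x (y + z) = cinner x y + cinner x z"
  by (simp add: cinner_commute[of x] cinner_add_left)

lemma cinner_scaleC_right: "cinner x (a *\<^sub>C y) = cnj a * cinner x y"
  by (simp add: cinner_commute[of x] cinner_scaleC_left)

lemma cinner_minus_left: "cinner (- x) y = - cinner x y"
  using cinner_add_left[of x "- x" y]
    Groups.group_add_class.minus_unique[of "cinner x y" "cinner (- x) y"] by simp

lemma cinner_minus_right: "cinner y (- x) = - cinner y x"
  by (simp add: cinner_commute[of y] cinner_minus_left)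

lemma cinner_diff_left: "cinner (x - z) y = cinner x y - cinner z y"
  using cinner_add_left[of x "- z" y] by (simp add: cinner_minus_left)

lemma cinner_diff_right: "cinner y (x - z) = cinner y x - cinner y z"
  using cinner_add_right[of y x "- z"] by (simp add: cinner_minus_right)

lemma cinner_scaleR_left: "cinner (r *\<^sub>R x) y = complex_of_real r * cinner x y"
  by (simp add: scaleR_scaleC cinner_scaleC_left)

lemma cinner_scaleR_right: "cinner y (r *\<^sub>R x) = complex_of_real r * cinner y x"
  by (simp add: scaleR_scaleC cinner_scaleC_right)

lemma cinner_self_eq_norm_square: "cinner x x = complex_of_real ((norm x)\<^sup>2)"
  using cinner_real_nonneg[of x] norm_eq_sqrt_cinner[of x] by (simp add: complex_eq_iff)

lemma norm_cinner_le: "cmod (cinner x y) \<le> norm x * norm y"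
proof (cases "y = 0")
  case True
  then show ?thesis by simp
next
  case False
  define N where "N = (norm y)\<^sup>2"
  define c where "c = cinner x y"
  define t where "t = c / complex_of_real N"
  have N: "N > 0"
    using False N_def by simp
  have yy: "cinner y y = complex_of_real N"
    using cinner_self_eq_norm_square N_def by simp
  have yx: "cinner y x = cnj c"
    unfolding c_def by (rule cinner_commute)
  \<comment> \<open>t y is the orthogonal projection of x onto y\<close>
  have "cinner (x - t *\<^sub>C y) (x - t *\<^sub>C y)
      = cinner x x - cnj t * c - t * cnj c + t * cnj t * complex_of_real N"
    by (simp add: cinner_diff_left cinner_diff_right cinner_scaleC_left cinner_scaleC_right
        yy yx c_def algebra_simps)
  also have "\<dots> = complex_of_real ((norm x)\<^sup>2 - (cmod c)\<^sup>2 / N)"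
    using N unfolding t_def cinner_self_eq_norm_square
    by (simp add: complex_eq_iff field_simps power2_eq_square cmod_def)
  finally have E: "cinner (x - t *\<^sub>C y) (x - t *\<^sub>C y)
      = complex_of_real ((norm x)\<^sup>2 - (cmod c)\<^sup>2 / N)" .
  have "0 \<le> Re (cinner (x - t *\<^sub>C y) (x - t *\<^sub>C y))"
    using cinner_real_nonneg by blast
  with E have "0 \<le> (norm x)\<^sup>2 - (cmod c)\<^sup>2 / N"
    by simp
  then have "(cmod c)\<^sup>2 \<le> (norm x)\<^sup>2 * (norm y)\<^sup>2"
    using N N_def by (simp add: field_simps)
  then have "(cmod c)\<^sup>2 \<le> (norm x * norm y)\<^sup>2"
    by (simp add: power_mult_distrib)
  from power2_le_imp_le[OF this] show ?thesis
    unfolding c_def by simp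
qed

lemma norm_reflection_eq:
  assumes "norm x = 1"
  shows "norm ((2 * cinner w x) *\<^sub>C x - w) = norm w"
proof -
  let ?c = "cinner w x"
  have "cinner ((2 * ?c) *\<^sub>C x - w) ((2 * ?c) *\<^sub>C x - w)
      = 4 * (?c * cnj ?c) * cinner x x - 2 * ?c * cinner x w - 2 * cnj ?c * ?c + cinner w w"
    by (simp add: cinner_diff_left cinner_diff_right cinner_scaleC_left cinner_scaleC_right
        algebra_simps)
  also have "\<dots> = cinner w w"
    using assms by (simp add: cinner_self_eq_norm_square[of x] cinner_commute[of x w])
  finally have "complex_of_real ((norm ((2 * ?c) *\<^sub>C x - w))\<^sup>2) = complex_of_real ((norm w)\<^sup>2)"
    by (simp only: cinner_self_eq_norm_square)
  then have "(norm ((2 * ?c) *\<^sub>C x - w))\<^sup>2 = (norm w)\<^sup>2"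
    by (rule of_real_eq_iff[THEN iffD1])
  then show ?thesis
    using power2_eq_iff_nonneg[of "norm ((2 * ?c) *\<^sub>C x - w)" "norm w"] by simp
qed

end

lemma bounded_clinear_imp_bounded_linear:
  assumes "bounded_clinear T"
  shows "bounded_linear T"
proof -
  obtain K where "\<forall>x. norm (T x) \<le> norm x * K"
    using assms by (auto simp: bounded_clinear_def)
  with assms show ?thesis
    by (intro bounded_linear_intro[of _ K]) (auto simp: bounded_clinear_def scaleR_scaleC)
qed

lemma bounded_clinear_scaleC: "bounded_clinear T \<Longrightarrow> T (c *\<^sub>C x) = c *\<^sub>C T x"
  unfolding bounded_clinear_def by blast

lemma bounded_clinear_diff: "bounded_clinear T \<Longrightarrow> T (x - y) = T x - T y"
  by (simp add: bounded_clinear_imp_bounded_linear linear_diff bounded_linear.linear)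

lemma cinner_adjoint_left: "is_adjoint As A \<Longrightarrow> cinner (As y) x = cinner y (A x)"
  unfolding is_adjoint_def by (metis cinner_commute)

lemma bounded_clinear_onorm_nonneg: "bounded_clinear T \<Longrightarrow> 0 \<le> onorm T"
  by (simp add: onorm_pos_le bounded_clinear_imp_bounded_linear)

lemma norm_adjoint_le:
  assumes "bounded_clinear A" and "is_adjoint As A"
  shows "norm (As y) \<le> onorm A * norm y"
proof (cases "As y = 0")
  case True
  then show ?thesis
    using bounded_clinear_onorm_nonneg[OF assms(1)] by simp
next
  case False
  have "norm (As y) * norm (As y) = Re (cinner (A (As y)) y)"
    using assms(2) by (simp add: is_adjoint_def cinner_self_eq_norm_square power2_eq_square)
  also have "\<dots> \<le> norm (A (As y)) * norm y"
    using complex_Re_le_cmod norm_cinner_le order_trans by blast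
  also have "\<dots> \<le> (onorm A * norm y) * norm (As y)"
    using mult_right_mono[OF onorm[OF bounded_clinear_imp_bounded_linear[OF assms(1)]] norm_ge_zero]
    by (simp add: mult_ac)
  finally show ?thesis
    using False by simp
qed

lemma norm_comp_adjoint_le:
  assumes "bounded_clinear A" and "bounded_clinear B" and "is_adjoint As A"
  shows "norm (B (As y)) \<le> onorm A * onorm B * norm y"
proof -
  have "norm (B (As y)) \<le> onorm B * norm (As y)"
    by (rule onorm[OF bounded_clinear_imp_bounded_linear[OF assms(2)]])
  also have "\<dots> \<le> onorm B * (onorm A * norm y)"
    using norm_adjoint_le[OF assms(1,3)] bounded_clinear_onorm_nonneg[OF assms(2)]
    by (rule mult_left_mono)
  finally show ?thesis
    by (simp add: mult_ac)
qed

lemma norm_adjoint_comp_le: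
  assumes "bounded_clinear A" and "bounded_clinear B" and "is_adjoint As A"
  shows "norm (As (B y)) \<le> onorm A * onorm B * norm y"
proof -
  have "norm (As (B y)) \<le> onorm A * norm (B y)"
    by (rule norm_adjoint_le[OF assms(1,3)])
  also have "\<dots> \<le> onorm A * (onorm B * norm y)"
    using onorm[OF bounded_clinear_imp_bounded_linear[OF assms(2)]]
      bounded_clinear_onorm_nonneg[OF assms(1)]
    by (rule mult_left_mono)
  finally show ?thesis
    by (simp add: mult_ac)
qed

lemma numerical_radius_le:
  assumes "\<And>x. norm x = 1 \<Longrightarrow> cmod (cinner (T x) x) \<le> M" and "0 \<le> M"
  shows "numerical_radius T \<le> M"
  unfolding numerical_radius_def using assms by (intro cSup_least) auto

lemma bdd_above_numerical_range:
  fixes T :: "'a::complex_inner \<Rightarrow> 'a"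
  assumes "\<And>x. norm (T x) \<le> K * norm x"
  shows "bdd_above (insert 0 {cmod (cinner (T x) x) | x. norm x = 1})"
proof -
  have "cmod (cinner (T x) x) \<le> K" if "norm x = 1" for x
    using norm_cinner_le[of "T x" x] assms[of x] that by simp
  then show ?thesis
    by (intro bdd_aboveI[of _ "max 0 K"]) force
qed

lemma numerical_radius_nonneg:
  fixes T :: "'a::complex_inner \<Rightarrow> 'a"
  assumes "\<And>x. norm (T x) \<le> K * norm x"
  shows "0 \<le> numerical_radius T"
  unfolding numerical_radius_def using bdd_above_numerical_range[OF assms]
  by (auto intro: cSup_upper)

lemma cmod_cinner_le_numerical_radius:
  fixes T :: "'a::complex_inner \<Rightarrow> 'a"
  assumes "\<And>x. norm (T x) \<le> K * norm x" and "norm x = 1"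
  shows "cmod (cinner (T x) x) \<le> numerical_radius T"
  unfolding numerical_radius_def using bdd_above_numerical_range[OF assms(1)] assms(2)
  by (auto intro: cSup_upper)

lemma cmod_cinner_mult_le:
  assumes A: "bounded_clinear A" and B: "bounded_clinear B" and adj: "is_adjoint As A"
    and x: "norm x = 1" and y: "norm y = 1"
  shows "2 * cmod (cinner y (A x) * cinner (B x) y)
           \<le> onorm A * onorm B + cmod (cinner (B (As y)) y)"
proof -
  define w where "w = As y"
  define r where "r = (2 * cinner w x) *\<^sub>C x - w"
  have split: "2 * (cinner y (A x) * cinner (B x) y) = cinner (B r) y + cinner (B w) y"
    by (simp add: r_def w_def cinner_adjoint_left[OF adj] bounded_clinear_diff[OF B]
        bounded_clinear_scaleC[OF B] cinner_diff_left cinner_scaleC_left)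
  have "2 * cmod (cinner y (A x) * cinner (B x) y) = cmod (cinner (B r) y + cinner (B w) y)"
    using arg_cong[OF split, of cmod] by (simp add: norm_mult)
  also have "\<dots> \<le> cmod (cinner (B r) y) + cmod (cinner (B w) y)"
    by (rule norm_triangle_ineq)
  finally have "2 * cmod (cinner y (A x) * cinner (B x) y)
      \<le> cmod (cinner (B r) y) + cmod (cinner (B w) y)" .
  moreover have "cmod (cinner (B r) y) \<le> onorm A * onorm B"
  proof -
    have "cmod (cinner (B r) y) \<le> onorm B * norm r"
      using norm_cinner_le[of "B r" y] onorm[OF bounded_clinear_imp_bounded_linear[OF B], of r] y
      by simp
    also have "norm r = norm w"
      unfolding r_def using x by (rule norm_reflection_eq)
    also have "onorm B * norm w \<le> onorm B * onorm A"
      using norm_adjoint_le[OF A adj, of y] y bounded_clinear_onorm_nonneg[OF B]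
      by (simp add: w_def mult_left_mono)
    finally show ?thesis
      by (simp add: mult.commute)
  qed
  ultimately show ?thesis
    by (simp add: w_def)
qed

lemma numerical_radius_adjoint_comp_le:
  fixes A B As :: "'a::complex_inner \<Rightarrow> 'a"
  assumes A: "bounded_clinear A" and B: "bounded_clinear B" and adj: "is_adjoint As A"
  shows "2 * numerical_radius (As \<circ> B) \<le> onorm A * onorm B + numerical_radius (B \<circ> As)"
proof -
  have bound: "\<And>y. norm ((B \<circ> As) y) \<le> (onorm A * onorm B) * norm y"
    using norm_comp_adjoint_le[OF A B adj] by simp
  have ab: "0 \<le> onorm A * onorm B"
    using bounded_clinear_onorm_nonneg[OF A] bounded_clinear_onorm_nonneg[OF B] by simp
  have "2 * cmod (cinner ((As \<circ> B) x) x) \<le> onorm A * onorm B + numerical_radius (B \<circ> As)"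
    if x: "norm x = 1" for x
  proof -
    have "cinner ((As \<circ> B) x) x = cinner (B x) (A x)"
      by (simp add: cinner_adjoint_left[OF adj])
    moreover have "0 \<le> numerical_radius (B \<circ> As)"
      using numerical_radius_nonneg[OF bound] .
    moreover have "2 * cmod (cinner (B x) (A x))
        \<le> onorm A * onorm B + numerical_radius (B \<circ> As)" if "B x \<noteq> 0"
    proof -
      define y where "y = (1 / norm (B x)) *\<^sub>R B x"
      have y: "norm y = 1"
        using that by (simp add: y_def)
      have "cinner y (A x) * cinner (B x) y = cinner (B x) (A x)"
        using that by (simp add: y_def cinner_scaleR_left cinner_scaleR_right
            cinner_self_eq_norm_square power2_eq_square)
      then show ?thesis
        using cmod_cinner_mult_le[OF A B adj x y]
          cmod_cinner_le_numerical_radius[OF bound y] by (simp add: comp_def)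
    qed
    ultimately show ?thesis
      using ab by (cases "B x = 0") auto
  qed
  then show ?thesis
    using numerical_radius_le[of "As \<circ> B" "(onorm A * onorm B + numerical_radius (B \<circ> As)) / 2"]
      ab numerical_radius_nonneg[OF bound] by (simp add: field_simps)
qed

lemma mono_convex_on_le_midpoint:
  fixes h :: "real \<Rightarrow> real"
  assumes "mono_on {0..} h" and "convex_on {0..} h"
    and "0 \<le> t" and "t \<le> (a + b) / 2" and "0 \<le> a" and "0 \<le> b"
  shows "h t \<le> 1/2 * h a + 1/2 * h b"
proof -
  have "h t \<le> h ((1 - 1/2) *\<^sub>R a + (1/2) *\<^sub>R b)"
    using assms by (intro mono_onD[OF assms(1)]) auto
  also have "\<dots> \<le> (1 - 1/2) * h a + (1/2) * h b"
    using assms by (intro convex_onD[OF assms(2)]) auto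
  finally show ?thesis
    by simp
qed

theorem mainTheorem4:
  fixes A B As :: "'a::chilbert_space \<Rightarrow> 'a" and h :: "real \<Rightarrow> real"
  assumes "bounded_clinear A" and "bounded_clinear B"
    and "is_adjoint As A"
    and "\<forall>t\<ge>0. h t \<ge> 0" and "mono_on {0..} h" and "convex_on {0..} h"
  shows "h (numerical_radius (As \<circ> B))
           \<le> 1/2 * h (onorm A * onorm B) + 1/2 * h (numerical_radius (B \<circ> As))"
proof (rule mono_convex_on_le_midpoint[OF assms(5,6)])
  show "0 \<le> numerical_radius (As \<circ> B)"
    using norm_adjoint_comp_le[OF assms(1-3)] by (intro numerical_radius_nonneg) simp
  show "0 \<le> numerical_radius (B \<circ> As)"
    using norm_comp_adjoint_le[OF assms(1-3)] by (intro numerical_radius_nonneg) simp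
  show "0 \<le> onorm A * onorm B"
    using bounded_clinear_onorm_nonneg[OF assms(1)] bounded_clinear_onorm_nonneg[OF assms(2)] by simp
  show "numerical_radius (As \<circ> B) \<le> (onorm A * onorm B + numerical_radius (B \<circ> As)) / 2"
    using numerical_radius_adjoint_comp_le[OF assms(1-3)] by simp
qed

end
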